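(* In the Rustichini setting, let $F\in\mathcal F$ and $x,y\in\operatorname{ri}(F)$. Then $\mathcal N(x)=\mathcal N(y)$.
   Context: Rustichini setting: a $k$-action partial monitoring game with finite latent space $\mathcal Z$, loss $\mathcal L:[k]\times\mathcal Z\to[0,1]$, signal $\mathcal S:[k]\times\mathcal Z\to\Sigma$; $\mathcal K$ = probability simplex on $\mathcal Z$; $\Delta_k$ = probability simplex on $[k]$; $\mathcal L(\pi,x)=\sum_a\sum_z\pi(a)x(z)\mathcal L(a,z)$; $\mathcal S(a,x)$ = law of $\mathcal S(a,z)$, $z\sim x$; $x\,\mathrm R\,y$ iff $\mathcal S(a,x)=\mathcal S(a,y)$ for all $a$; $\mathcal V(\pi,x)=\sup_{y\,\mathrm R\,x}\mathcal L(\pi,y)$; $\mathcal V_\star(x)=\min_{\pi\in\Delta_k}\mathcal V(\pi,x)$; $\Delta(\pi,x)=\mathcal V(\pi,x)-\mathcal V_\star(x)$. $\mathcal V_\star$ is concave piecewise linear and $m$ is the smallest integer with $\mathcal V_\star(x)=\min_{\alpha\in[m]}\mathcal V^m(x)_\alpha$ for some linear $\mathcal V^m:\mathcal K\to\mathbb R^m$. For $\alpha\in[m]$ the cell is the polytope $P_\alpha=\{x\in\mathcal K:\mathcal V_\star(x)=\mathcal V^m(x)_\alpha\}$, and $\mathcal F=\bigcup_{\alpha\in[m]}\operatorname{faces}(P_\alpha)$ (faces include the polytope itself and $\emptyset$). $\mathcal N(x)=\{\pi\in\Delta_k:\Delta(\pi,x)=0\}$. $\operatorname{ri}$ denotes relative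 interior. *)

theory Defs
  imports "HOL-Analysis.Analysis"
begin

text \<open>Actions are the elements of a finite type 'a (so k = CARD('a));
  the latent space is a finite type 'z; signals take values in a type 'b.\<close>

definition simplexK :: "(real^'z::finite) set" where
  "simplexK = {x. (\<forall>z. 0 \<le> x$z) \<and> (\<Sum>z\<in>UNIV. x$z) = 1}"

definition actsimplex :: "('a::finite \<Rightarrow> real) set" where
  "actsimplex = {p. (\<forall>a. 0 \<le> p a) \<and> (\<Sum>a\<in>UNIV. p a) = 1}"

definition lossmix :: "('a::finite \<Rightarrow> 'z::finite \<Rightarrow> real) \<Rightarrow> ('a \<Rightarrow> real) \<Rightarrow> real^'z \<Rightarrow> real" where
  "lossmix L p x = (\<Sum>a\<in>UNIV. \<Sum>z\<in>UNIV. p a * x$z * L a z)"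

text \<open>Equality of the laws of S(a,z), z ~ x and z ~ y, for every action a.\<close>
definition sigrel :: "('a \<Rightarrow> 'z::finite \<Rightarrow> 'b) \<Rightarrow> real^'z \<Rightarrow> real^'z \<Rightarrow> bool" where
  "sigrel S x y \<longleftrightarrow> (\<forall>a \<sigma>. (\<Sum>z\<in>{z. S a z = \<sigma>}. x$z) = (\<Sum>z\<in>{z. S a z = \<sigma>}. y$z))"

definition Vfun :: "('a::finite \<Rightarrow> 'z::finite \<Rightarrow> real) \<Rightarrow> ('a \<Rightarrow> 'z \<Rightarrow> 'b) \<Rightarrow> ('a \<Rightarrow> real) \<Rightarrow> real^'z \<Rightarrow> real" where
  "Vfun L S p x = (SUP y\<in>{y\<in>simplexK. sigrel S y x}. lossmix L p y)"

definition Vstar :: "('a::finite \<Rightarrow> 'z::finite \<Rightarrow> real) \<Rightarrow> ('a \<Rightarrow> 'z \<Rightarrow> 'b) \<Rightarrow> real^'z \<Rightarrow> real" where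
  "Vstar L S x = (INF p\<in>actsimplex. Vfun L S p x)"

definition regret :: "('a::finite \<Rightarrow> 'z::finite \<Rightarrow> real) \<Rightarrow> ('a \<Rightarrow> 'z \<Rightarrow> 'b) \<Rightarrow> ('a \<Rightarrow> real) \<Rightarrow> real^'z \<Rightarrow> real" where
  "regret L S p x = Vfun L S p x - Vstar L S x"

definition Nset :: "('a::finite \<Rightarrow> 'z::finite \<Rightarrow> real) \<Rightarrow> ('a \<Rightarrow> 'z \<Rightarrow> 'b) \<Rightarrow> real^'z \<Rightarrow> ('a \<Rightarrow> real) set" where
  "Nset L S x = {p\<in>actsimplex. regret L S p x = 0}"

definition is_rep :: "('a::finite \<Rightarrow> 'z::finite \<Rightarrow> real) \<Rightarrow> ('a \<Rightarrow> 'z \<Rightarrow> 'b) \<Rightarrow> nat \<Rightarrow> (nat \<Rightarrow> real^'z) \<Rightarrow> bool" where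
  "is_rep L S m c \<longleftrightarrow> 0 < m \<and> (\<forall>x\<in>simplexK. Vstar L S x = Min ((\<lambda>\<alpha>. c \<alpha> \<bullet> x) ` {..<m}))"

definition min_rep :: "('a::finite \<Rightarrow> 'z::finite \<Rightarrow> real) \<Rightarrow> ('a \<Rightarrow> 'z \<Rightarrow> 'b) \<Rightarrow> nat \<Rightarrow> (nat \<Rightarrow> real^'z) \<Rightarrow> bool" where
  "min_rep L S m c \<longleftrightarrow> is_rep L S m c \<and> (\<forall>m' (c'::nat \<Rightarrow> real^'z). is_rep L S m' c' \<longrightarrow> m \<le> m')"

definition cell :: "('a::finite \<Rightarrow> 'z::finite \<Rightarrow> real) \<Rightarrow> ('a \<Rightarrow> 'z \<Rightarrow> 'b) \<Rightarrow> (nat \<Rightarrow> real^'z) \<Rightarrow> nat \<Rightarrow> (real^'z) set" where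
  "cell L S c \<alpha> = {x\<in>simplexK. Vstar L S x = c \<alpha> \<bullet> x}"

end

theory Submission
  imports Defs
begin

text \<open>For fixed p, V(p,x) is the supremum of the linear map lossmix L p over the beliefs
  signal-equivalent to x; that set depends affinely on x, so V(p,\<cdot>) is concave on K.
  On a convex subset F of a cell, V_star agrees with a linear function and lies below every
  V(p,\<cdot>). A relative interior point u of F is a proper convex combination of any v \<in> F
  and some w \<in> F, so V(p,u) = V_star(u) forces V(p,v) = V_star(v) by concavity; thus
  N(u) \<subseteq> N(v).\<close>

lemma sigrel_refl: "sigrel S x x"
  by (simp add: sigrel_def)

lemma sigrel_convex_combination:
  assumes "sigrel S y' y" "sigrel S z' z"
  shows "sigrel S (t *\<^sub>R y' + (1 - t) *\<^sub>R z') (t *\<^sub>R y + (1 - t) *\<^sub>R z)"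
  using assms by (simp add: sigrel_def sum.distrib sum_distrib_left[symmetric])

lemma simplexK_convex_combination:
  assumes "y \<in> simplexK" "z \<in> simplexK" "0 \<le> t" "t \<le> 1"
  shows "t *\<^sub>R y + (1 - t) *\<^sub>R z \<in> simplexK"
  using assms by (auto simp: simplexK_def sum.distrib sum_distrib_left[symmetric])

lemma lossmix_convex_combination:
  "lossmix L p (t *\<^sub>R y + (1 - t) *\<^sub>R z) = t * lossmix L p y + (1 - t) * lossmix L p z"
proof -
  have "lossmix L p (t *\<^sub>R y + (1 - t) *\<^sub>R z) =
      (\<Sum>a\<in>UNIV. \<Sum>w\<in>UNIV. t * (p a * y$w * L a w) + (1 - t) * (p a * z$w * L a w))"
    unfolding lossmix_def by (intro sum.cong refl) (simp add: algebra_simps)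
  also have "\<dots> = t * lossmix L p y + (1 - t) * lossmix L p z"
    unfolding lossmix_def by (simp add: sum.distrib sum_distrib_left)
  finally show ?thesis .
qed

lemma lossmix_nonneg:
  assumes "\<And>a z. 0 \<le> L a z" "p \<in> actsimplex" "y \<in> simplexK"
  shows "0 \<le> lossmix L p y"
  using assms unfolding lossmix_def actsimplex_def simplexK_def
  by (intro sum_nonneg) auto

lemma lossmix_le_1:
  assumes "\<And>a z. 0 \<le> L a z \<and> L a z \<le> 1" "p \<in> actsimplex" "y \<in> simplexK"
  shows "lossmix L p y \<le> 1"
proof -
  have "lossmix L p y \<le> (\<Sum>a\<in>UNIV. \<Sum>z\<in>UNIV. p a * y$z)"
    unfolding lossmix_def
    using assms unfolding actsimplex_def simplexK_def
    by (intro sum_mono) (simp add: mult_left_le)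
  also have "\<dots> = 1"
    using assms(2,3) unfolding actsimplex_def simplexK_def
    by (simp add: sum_distrib_left[symmetric])
  finally show ?thesis .
qed

lemma lossmix_le_Vfun:
  assumes "\<And>a z. 0 \<le> L a z \<and> L a z \<le> 1" "p \<in> actsimplex"
    and "y \<in> simplexK" "sigrel S y x"
  shows "lossmix L p y \<le> Vfun L S p x"
  unfolding Vfun_def
proof (rule cSUP_upper)
  show "bdd_above (lossmix L p ` {y \<in> simplexK. sigrel S y x})"
    using assms(1,2) lossmix_le_1 by (intro bdd_aboveI[where M = 1]) blast
qed (use assms in simp)

lemma Vfun_le:
  assumes "x \<in> simplexK" "\<And>y. y \<in> simplexK \<Longrightarrow> sigrel S y x \<Longrightarrow> lossmix L p y \<le> C"
  shows "Vfun L S p x \<le> C"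
  unfolding Vfun_def using assms sigrel_refl by (intro cSUP_least) auto

lemma Vstar_le_Vfun:
  assumes "\<And>a z. 0 \<le> L a z \<and> L a z \<le> 1" "p \<in> actsimplex" "x \<in> simplexK"
  shows "Vstar L S x \<le> Vfun L S p x"
  unfolding Vstar_def
proof (rule cINF_lower)
  have "0 \<le> Vfun L S q x" if "q \<in> actsimplex" for q
  proof -
    have "0 \<le> lossmix L q x"
      by (rule lossmix_nonneg) (use assms(1,3) that in auto)
    also have "\<dots> \<le> Vfun L S q x"
      by (rule lossmix_le_Vfun[OF assms(1) that assms(3) sigrel_refl])
    finally show ?thesis .
  qed
  then show "bdd_below ((\<lambda>q. Vfun L S q x) ` actsimplex)"
    by (intro bdd_belowI[where m = 0]) blast
qed (rule assms(2))

lemma Vfun_concave: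
  assumes L: "\<And>a z. 0 \<le> L a z \<and> L a z \<le> 1" and p: "p \<in> actsimplex"
    and y: "y \<in> simplexK" and z: "z \<in> simplexK" and t: "0 < t" "t < 1"
  shows "t * Vfun L S p y + (1 - t) * Vfun L S p z \<le> Vfun L S p (t *\<^sub>R y + (1 - t) *\<^sub>R z)"
    (is "_ \<le> ?V")
proof -
  have combination_le:
    "t * lossmix L p y' + (1 - t) * lossmix L p z' \<le> ?V"
    if "y' \<in> simplexK" "sigrel S y' y" "z' \<in> simplexK" "sigrel S z' z" for y' z'
    using lossmix_le_Vfun[OF L p simplexK_convex_combination[of y' z' t] sigrel_convex_combination]
      that t
    by (simp add: lossmix_convex_combination)
  have "Vfun L S p z \<le> (?V - t * Vfun L S p y) / (1 - t)"
  proof (rule Vfun_le[OF z])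
    fix z' assume z': "z' \<in> simplexK" "sigrel S z' z"
    have "Vfun L S p y \<le> (?V - (1 - t) * lossmix L p z') / t"
    proof (rule Vfun_le[OF y])
      fix y' assume "y' \<in> simplexK" "sigrel S y' y"
      then show "lossmix L p y' \<le> (?V - (1 - t) * lossmix L p z') / t"
        using combination_le[of y' z'] z' t by (simp add: pos_le_divide_eq mult.commute)
    qed
    then show "lossmix L p z' \<le> (?V - t * Vfun L S p y) / (1 - t)"
      using t by (simp add: pos_le_divide_eq pos_divide_le_eq mult.commute)
  qed
  then show ?thesis
    using t by (simp add: pos_le_divide_eq mult.commute)
qed

lemma Nset_iff: "p \<in> Nset L S x \<longleftrightarrow> p \<in> actsimplex \<and> Vfun L S p x = Vstar L S x"
  by (simp add: Nset_def regret_def)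

lemma rel_interior_convex_combination:
  fixes F :: "'n::euclidean_space set"
  assumes "convex F" "u \<in> rel_interior F" "v \<in> F"
  obtains w t where "w \<in> F" "0 < t" "t < 1" "u = t *\<^sub>R v + (1 - t) *\<^sub>R w"
proof -
  obtain e where e: "e > 1" "(1 - e) *\<^sub>R v + e *\<^sub>R u \<in> F"
    using assms convex_rel_interior_iff by blast
  define w where "w = (1 - e) *\<^sub>R v + e *\<^sub>R u"
  have "u = (1 - 1 / e) *\<^sub>R v + (1 - (1 - 1 / e)) *\<^sub>R w"
    using e(1) by (simp add: w_def algebra_simps)
  from that[OF _ _ _ this] show ?thesis
    using e by (simp add: w_def)
qed

lemma Nset_rel_interior_subset:
  assumes L: "\<And>a z. 0 \<le> L a z \<and> L a z \<le> 1"
    and F: "convex F" "F \<subseteq> cell L S c \<alpha>"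
    and u: "u \<in> rel_interior F" and v: "v \<in> F"
  shows "Nset L S u \<subseteq> Nset L S v"
proof
  fix p assume "p \<in> Nset L S u"
  then have p: "p \<in> actsimplex" and pu: "Vfun L S p u = Vstar L S u"
    by (simp_all add: Nset_iff)
  obtain w t where w: "w \<in> F" and t: "0 < t" "t < 1" and u_eq: "u = t *\<^sub>R v + (1 - t) *\<^sub>R w"
    using rel_interior_convex_combination[OF F(1) u v] .
  have on_cell: "q \<in> simplexK \<and> Vstar L S q = c \<alpha> \<bullet> q" if "q \<in> F" for q
    using F(2) that by (auto simp: cell_def)
  have uF: "u \<in> F"
    using u rel_interior_subset by blast
  have "t * Vfun L S p v + (1 - t) * Vfun L S p w \<le> Vfun L S p u"
    unfolding u_eq by (rule Vfun_concave[OF L p]) (use on_cell v w t in auto)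
  also have "\<dots> = t * (c \<alpha> \<bullet> v) + (1 - t) * (c \<alpha> \<bullet> w)"
    using pu on_cell[OF uF] u_eq by (simp add: inner_add_right)
  finally have concave_le:
    "t * Vfun L S p v + (1 - t) * Vfun L S p w \<le> t * (c \<alpha> \<bullet> v) + (1 - t) * (c \<alpha> \<bullet> w)" .
  have "c \<alpha> \<bullet> w \<le> Vfun L S p w"
    using Vstar_le_Vfun[of L p w S] L p on_cell[OF w] by simp
  then have "(1 - t) * (c \<alpha> \<bullet> w) \<le> (1 - t) * Vfun L S p w"
    using t by (intro mult_left_mono) auto
  then have "t * Vfun L S p v \<le> t * (c \<alpha> \<bullet> v)"
    using concave_le by linarith
  then have "Vfun L S p v \<le> c \<alpha> \<bullet> v"
    using t by simp
  moreover have "c \<alpha> \<bullet> v \<le> Vfun L S p v"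
    using Vstar_le_Vfun[of L p v S] L p on_cell[OF v] by simp
  ultimately show "p \<in> Nset L S v"
    using p on_cell[OF v] by (simp add: Nset_iff)
qed

theorem lemma5:
  fixes L :: "'a::finite \<Rightarrow> 'z::finite \<Rightarrow> real"
    and S :: "'a \<Rightarrow> 'z \<Rightarrow> 'b"
    and m :: nat and c :: "nat \<Rightarrow> real^'z"
    and F :: "(real^'z) set" and \<alpha> :: nat and x y :: "real^'z"
  assumes "\<And>a z. 0 \<le> L a z \<and> L a z \<le> 1"
    and "min_rep L S m c"
    and "\<alpha> < m"
    and "F face_of cell L S c \<alpha>"
    and "x \<in> rel_interior F" and "y \<in> rel_interior F"
  shows "Nset L S x = Nset L S y"
proof -
  have F: "convex F" "F \<subseteq> cell L S c \<alpha>"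
    using assms(4) by (simp_all add: face_of_imp_convex face_of_imp_subset)
  have "x \<in> F" "y \<in> F"
    using assms(5,6) rel_interior_subset by blast+
  then show ?thesis
    using Nset_rel_interior_subset[OF assms(1) F] assms(5,6) by (simp add: subset_antisym)
qed

end
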